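(* Let $r \in \mathbb{Z}_{\geqslant 2}$. For any real number $x \geqslant 1$, $$\sum_{n_1 \leqslant x, \dotsc, n_r \leqslant x} \left( \mu \left( n_1 \right) + \dotsb + \mu \left( n_r \right) \right) \left \lfloor \frac{x}{n_1 \dotsb n_r} \right \rfloor = r \sum_{n \leqslant x} \tau_{r-1}(n),$$ where the sum on the left runs over all $r$-tuples of positive integers $n_1,\dots,n_r \leqslant x$.
   Context: $\mu$ is the Möbius function, $\lfloor \cdot \rfloor$ the integer part, and $\tau_k(n)$ is the number of ways of writing $n$ as an ordered product of $k$ positive integers (so $\tau_1 \equiv 1$, $\tau_2 = \tau$ is the divisor function). *)

theory Defs
  imports "HOL-Analysis.Analysis" "HOL-Computational_Algebra.Squarefree"
begin

text \<open>Moebius function on positive integers (value at 0 is irrelevant; set to 0).\<close>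
definition moebius_mu :: "nat \<Rightarrow> int" where
  "moebius_mu n = (if n = 0 \<or> \<not> squarefree n then 0 else (-1) ^ card (prime_factors n))"

definition divisor_tau :: "nat \<Rightarrow> nat \<Rightarrow> nat" where
  "divisor_tau k n = card {d \<in> {0..<k} \<rightarrow>\<^sub>E {1..n}. (\<Prod>i<k. d i) = n}"

end

theory Submission imports Defs begin

text \<open>Expanding \<open>\<mu>(n\<^sub>1) + \<dots> + \<mu>(n\<^sub>r)\<close> and permuting coordinates, each of the \<open>r\<close>
  resulting sums equals the one carrying \<open>\<mu>\<close> on the last coordinate \<open>y\<close>. Summing over \<open>y\<close>
  first, with \<open>m\<close> the product of the other coordinates, \<open>\<lfloor>x/(m y)\<rfloor> = \<lfloor>\<lfloor>x/m\<rfloor>/y\<rfloor>\<close> and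
  \<open>\<Sum>y \<le> M. \<mu>(y) \<lfloor>M/y\<rfloor> = [M \<ge> 1]\<close> reduce it to the number of \<open>(r - 1)\<close>-tuples with
  product \<open>m \<le> x\<close>, which is \<open>\<Sum>n \<le> x. \<tau>\<^sub>r\<^sub>-\<^sub>1(n)\<close>.\<close>

lemma prod_prime_factors_squarefree:
  fixes d :: nat
  assumes "squarefree d"
  shows "\<Prod>(prime_factors d) = d"
proof -
  have "d \<noteq> 0" using assms by (metis not_squarefree_0)
  have "\<Prod>(prime_factors d) = (\<Prod>p\<in>prime_factors d. p ^ multiplicity p d)"
    using assms \<open>d \<noteq> 0\<close> by (intro prod.cong) (auto simp: squarefree_factorial_semiring')
  also have "\<dots> = d" using prod_prime_factors[OF \<open>d \<noteq> 0\<close>] by simp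
  finally show ?thesis .
qed

lemma prime_factors_prod_primes:
  fixes S :: "nat set"
  assumes "finite S" "\<And>p. p \<in> S \<Longrightarrow> prime p"
  shows "prime_factors (\<Prod>S) = S"
proof -
  have "0 \<notin> id ` S" using assms by (metis image_iff id_apply not_prime_0)
  then have "prime_factors (prod id S) = \<Union>((prime_factors \<circ> id) ` S)"
    using prime_factors_prod[OF assms(1)] by blast
  also have "\<dots> = S" using assms by (auto simp: prime_prime_factors)
  finally show ?thesis by simp
qed

lemma squarefree_prod_primes:
  fixes S :: "nat set"
  assumes "finite S" "\<And>p. p \<in> S \<Longrightarrow> prime p"
  shows "squarefree (\<Prod>S)"
  using assms by (intro squarefree_prod_coprime) (auto simp: primes_coprime squarefree_prime)

lemma prod_subset_prime_factors_dvd: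
  fixes n :: nat
  assumes "n > 0" "S \<subseteq> prime_factors n"
  shows "\<Prod>S dvd n"
proof -
  have "\<Prod>S dvd (\<Prod>p\<in>S. p ^ multiplicity p n)"
    using assms by (intro prod_dvd_prod) (auto simp: prime_factors_multiplicity)
  also have "\<dots> dvd (\<Prod>p\<in>prime_factors n. p ^ multiplicity p n)"
    using assms by (intro prod_dvd_prod_subset) auto
  also have "\<dots> = n" using prod_prime_factors[of n] assms by simp
  finally show ?thesis .
qed

text \<open>Squarefree divisors of \<open>n\<close> correspond to sets of prime factors of \<open>n\<close>,
  so the divisor sum of \<open>\<mu>\<close> is \<open>\<Prod>p | n. (1 - 1)\<close>.\<close>

lemma sum_moebius_mu_dvd:
  fixes n :: nat
  assumes "n > 0"
  shows "(\<Sum>d | d dvd n. moebius_mu d) = of_bool (n = 1)"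
proof -
  have "(\<Sum>d | d dvd n. moebius_mu d)
      = (\<Sum>d | d dvd n \<and> squarefree d. (-1) ^ card (prime_factors d))"
    using assms by (intro sum.mono_neutral_cong_right) (auto simp: moebius_mu_def)
  also have "\<dots> = (\<Sum>S\<in>Pow (prime_factors n). (-1) ^ card S)"
  proof (rule sum.reindex_bij_witness[where i = "\<lambda>S. \<Prod>S" and j = prime_factors])
    fix S assume S: "S \<in> Pow (prime_factors n)"
    then have "finite S" "\<And>p. p \<in> S \<Longrightarrow> prime p" by (auto intro: finite_subset)
    then show "prime_factors (\<Prod>S) = S" "\<Prod>S \<in> {d. d dvd n \<and> squarefree d}"
      using prod_subset_prime_factors_dvd[OF assms] S
      by (auto simp: prime_factors_prod_primes squarefree_prod_primes)
  next
    fix d assume "d \<in> {d. d dvd n \<and> squarefree d}"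
    then show "\<Prod>(prime_factors d) = d" "prime_factors d \<in> Pow (prime_factors n)"
      using assms by (auto intro: dvd_trans simp: prod_prime_factors_squarefree in_prime_factors_iff)
  qed simp
  also have "\<dots> = (\<Prod>p\<in>prime_factors n. (1::int) - 1)"
    by (subst prod_diff_conv_sum) simp_all
  also have "\<dots> = of_bool (n = 1)"
    using assms by (auto simp: prime_factorization_empty_iff card_gt_0_iff)
  finally show ?thesis .
qed

text \<open>Passing from \<open>M\<close> to \<open>M + 1\<close> raises \<open>M div y\<close> by one exactly for the
  divisors \<open>y\<close> of \<open>M + 1\<close>, which contribute \<open>\<Sum>y | y dvd M + 1. \<mu> y = [M = 0]\<close>.\<close>

lemma sum_moebius_mu_mult_div:
  fixes M N :: nat
  assumes "M \<le> N"
  shows "(\<Sum>y=1..N. moebius_mu y * int (M div y)) = of_bool (M > 0)"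
  using assms
proof (induction M)
  case 0
  then show ?case by simp
next
  case (Suc M)
  have "(\<Sum>y=1..N. moebius_mu y * int (Suc M div y))
      = (\<Sum>y=1..N. moebius_mu y * int (M div y))
        + (\<Sum>y=1..N. if y dvd Suc M then moebius_mu y else 0)"
    by (subst sum.distrib[symmetric], intro sum.cong)
       (auto simp: div_Suc mod_eq_0_iff_dvd algebra_simps)
  also have "(\<Sum>y=1..N. if y dvd Suc M then moebius_mu y else 0) = (\<Sum>d | d dvd Suc M. moebius_mu d)"
    using Suc.prems
    by (subst sum.inter_filter[symmetric])
       (auto intro!: sum.cong dest: dvd_imp_le simp: Suc_le_eq intro: dvd_pos_nat)
  finally show ?case
    using Suc by (simp add: sum_moebius_mu_dvd)
qed

lemma sum_PiE_insert:
  assumes "x \<notin> S"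
  shows "(\<Sum>f \<in> Pi\<^sub>E (insert x S) T. F f) = (\<Sum>y \<in> T x. \<Sum>g \<in> Pi\<^sub>E S T. F (g(x := y)))"
proof -
  have "(\<Sum>f \<in> Pi\<^sub>E (insert x S) T. F f) = (\<Sum>(y, g) \<in> T x \<times> Pi\<^sub>E S T. F (g(x := y)))"
    unfolding PiE_insert_eq by (subst sum.reindex[OF inj_combinator[OF assms]]) (simp add: case_prod_beta)
  then show ?thesis by (simp add: sum.cartesian_product)
qed

lemma sum_PiE_swap_coordinates:
  fixes h :: "'b :: comm_monoid_mult \<Rightarrow> 'b \<Rightarrow> 'a :: comm_monoid_add"
  assumes "i \<in> I" "j \<in> I"
  shows "(\<Sum>n \<in> I \<rightarrow>\<^sub>E A. h (n i) (\<Prod>l\<in>I. n l)) = (\<Sum>n \<in> I \<rightarrow>\<^sub>E A. h (n j) (\<Prod>l\<in>I. n l))"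
proof -
  define \<sigma> where "\<sigma> l = (if l = i then j else if l = j then i else l)" for l
  have \<sigma>_\<sigma>: "\<sigma> (\<sigma> l) = l" for l by (auto simp: \<sigma>_def)
  have \<sigma>_I: "\<sigma> l \<in> I \<longleftrightarrow> l \<in> I" for l using assms by (auto simp: \<sigma>_def)
  have prod_\<sigma>: "(\<Prod>l\<in>I. n (\<sigma> l)) = (\<Prod>l\<in>I. n l)" for n :: "_ \<Rightarrow> 'b"
    by (rule prod.reindex_bij_witness[where i = \<sigma> and j = \<sigma>]) (auto simp: \<sigma>_\<sigma> \<sigma>_I)
  have \<sigma>_PiE: "n \<circ> \<sigma> \<in> I \<rightarrow>\<^sub>E A" if "n \<in> I \<rightarrow>\<^sub>E A" for n :: "_ \<Rightarrow> 'b"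
    using that by (auto simp: PiE_iff extensional_def \<sigma>_I)
  show ?thesis
  proof (rule sum.reindex_bij_witness[where i = "\<lambda>n. n \<circ> \<sigma>" and j = "\<lambda>n. n \<circ> \<sigma>"])
    fix n show "h ((n \<circ> \<sigma>) j) (\<Prod>l\<in>I. (n \<circ> \<sigma>) l) = h (n i) (\<Prod>l\<in>I. n l)"
      using prod_\<sigma>[of n] by (simp add: \<sigma>_def)
  qed (auto simp: \<sigma>_\<sigma> \<sigma>_PiE)
qed

lemma sum_moebius_mu_last_coordinate:
  fixes N k :: nat
  shows "(\<Sum>n \<in> {0..<Suc k} \<rightarrow>\<^sub>E {1..N}. moebius_mu (n k) * int (N div (\<Prod>i<Suc k. n i)))
       = int (card {g \<in> {0..<k} \<rightarrow>\<^sub>E {1..N}. (\<Prod>i<k. g i) \<le> N})"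
proof -
  let ?P = "{0..<k} \<rightarrow>\<^sub>E {1..N}"
  have prod_positive: "(\<Prod>i<k. g i) > 0" if "g \<in> ?P" for g
    using that by (intro prod_pos) (auto simp: PiE_iff Suc_le_eq)
  have prod_upd: "(\<Prod>i<k. (g(k := y)) i) = (\<Prod>i<k. g i)" for g :: "nat \<Rightarrow> nat" and y
    by (intro prod.cong) auto
  have "(\<Sum>n \<in> {0..<Suc k} \<rightarrow>\<^sub>E {1..N}. moebius_mu (n k) * int (N div (\<Prod>i<Suc k. n i)))
      = (\<Sum>y \<in> {1..N}. \<Sum>g \<in> ?P. moebius_mu y * int (N div ((\<Prod>i<k. g i) * y)))"
    by (simp add: atLeast0_lessThan_Suc sum_PiE_insert prod_upd)
  also have "\<dots> = (\<Sum>g \<in> ?P. \<Sum>y \<in> {1..N}. moebius_mu y * int (N div (\<Prod>i<k. g i) div y))"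
    by (subst sum.swap) (simp add: div_mult2_eq)
  also have "\<dots> = (\<Sum>g \<in> ?P. of_bool ((\<Prod>i<k. g i) \<le> N))"
  proof (intro sum.cong refl)
    fix g assume "g \<in> ?P"
    then show "(\<Sum>y \<in> {1..N}. moebius_mu y * int (N div (\<Prod>i<k. g i) div y))
        = of_bool ((\<Prod>i<k. g i) \<le> N)"
      using prod_positive by (subst sum_moebius_mu_mult_div) (simp_all add: div_greater_zero_iff)
  qed
  also have "\<dots> = int (card {g \<in> ?P. (\<Prod>i<k. g i) \<le> N})"
    by (simp add: sum.If_cases finite_PiE Int_def conj_commute)
  finally show ?thesis .
qed

lemma sum_moebius_mu_coordinate:
  fixes N k :: nat
  assumes "i < Suc k"
  shows "(\<Sum>n \<in> {0..<Suc k} \<rightarrow>\<^sub>E {1..N}. moebius_mu (n i) * int (N div (\<Prod>j<Suc k. n j)))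
       = int (card {g \<in> {0..<k} \<rightarrow>\<^sub>E {1..N}. (\<Prod>j<k. g j) \<le> N})"
proof -
  have "(\<Sum>n \<in> {0..<Suc k} \<rightarrow>\<^sub>E {1..N}. moebius_mu (n i) * int (N div (\<Prod>j<Suc k. n j)))
      = (\<Sum>n \<in> {0..<Suc k} \<rightarrow>\<^sub>E {1..N}. moebius_mu (n k) * int (N div (\<Prod>j<Suc k. n j)))"
    using assms sum_PiE_swap_coordinates[of i "{0..<Suc k}" k "\<lambda>a b. moebius_mu a * int (N div b)"]
    unfolding lessThan_atLeast0 by simp
  then show ?thesis
    by (simp only: sum_moebius_mu_last_coordinate)
qed

lemma floor_divide_of_nat_eq_div:
  fixes x :: real
  assumes "x \<ge> 0"
  shows "\<lfloor>x / real P\<rfloor> = int (nat \<lfloor>x\<rfloor> div P)"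
proof -
  have "\<lfloor>x / real P\<rfloor> = \<lfloor>x\<rfloor> div int P"
    using floor_divide_real_eq_div[of "int P" x] by simp
  then show ?thesis using assms by (simp add: zdiv_int)
qed

lemma divisor_tau_eq_card_PiE:
  assumes "m \<le> N"
  shows "divisor_tau k m = card {g \<in> {0..<k} \<rightarrow>\<^sub>E {1..N}. (\<Prod>i<k. g i) = m}"
proof -
  have factor_le: "g i \<le> m" if "g \<in> {0..<k} \<rightarrow>\<^sub>E {1..N}" "(\<Prod>i<k. g i) = m" "i < k" for g i
  proof (rule dvd_imp_le)
    show "g i dvd m" using that by auto
    show "m > 0" using that by (auto intro!: prod_pos simp: PiE_iff Suc_le_eq)
  qed
  have "g \<in> {0..<k} \<rightarrow>\<^sub>E {1..m} \<longleftrightarrow> g \<in> {0..<k} \<rightarrow>\<^sub>E {1..N}" if "(\<Prod>i<k. g i) = m" for g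
    using factor_le[OF _ that] assms by (auto simp: PiE_iff)
  then have "{g \<in> {0..<k} \<rightarrow>\<^sub>E {1..m}. (\<Prod>i<k. g i) = m}
      = {g \<in> {0..<k} \<rightarrow>\<^sub>E {1..N}. (\<Prod>i<k. g i) = m}"
    by blast
  then show ?thesis unfolding divisor_tau_def by simp
qed

lemma card_PiE_prod_le:
  "card {g \<in> {0..<k} \<rightarrow>\<^sub>E {1..N}. (\<Prod>i<k. g i) \<le> N} = (\<Sum>m = 1..N. divisor_tau k m)"
proof -
  let ?P = "{0..<k} \<rightarrow>\<^sub>E {1..N}"
  have prod_ge_1: "(\<Prod>i<k. g i) \<ge> 1" if "g \<in> ?P" for g
    using that by (intro prod_ge_1) (auto simp: PiE_iff)
  have "{g \<in> ?P. (\<Prod>i<k. g i) \<le> N} = (\<Union>m\<in>{1..N}. {g \<in> ?P. (\<Prod>i<k. g i) = m})"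
    using prod_ge_1 by auto
  also have "card \<dots> = (\<Sum>m = 1..N. card {g \<in> ?P. (\<Prod>i<k. g i) = m})"
    by (rule card_UN_disjoint) (auto simp: finite_PiE)
  also have "\<dots> = (\<Sum>m = 1..N. divisor_tau k m)"
    by (rule sum.cong[OF refl], rule divisor_tau_eq_card_PiE[symmetric]) simp
  finally show ?thesis .
qed

theorem theorem1p6:
  fixes r :: nat and x :: real
  assumes "r \<ge> 2" and "x \<ge> 1"
  shows "(\<Sum>n \<in> {0..<r} \<rightarrow>\<^sub>E {1..nat \<lfloor>x\<rfloor>}.
            of_int (\<Sum>i<r. moebius_mu (n i)) * of_int \<lfloor>x / real (\<Prod>i<r. n i)\<rfloor>)
         = (of_nat r * (\<Sum>m = 1..nat \<lfloor>x\<rfloor>. of_nat (divisor_tau (r - 1) m)) :: int)"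
proof -
  define N where "N = nat \<lfloor>x\<rfloor>"
  define k where "k = r - 1"
  have r: "r = Suc k" using assms(1) by (simp add: k_def)
  have "x \<ge> 0" using assms(2) by simp
  let ?P = "{0..<Suc k} \<rightarrow>\<^sub>E {1..N}"
  have "(\<Sum>n \<in> ?P. of_int (\<Sum>i<Suc k. moebius_mu (n i)) * of_int \<lfloor>x / real (\<Prod>i<Suc k. n i)\<rfloor>)
      = (\<Sum>n \<in> ?P. \<Sum>i<Suc k. moebius_mu (n i) * int (N div (\<Prod>j<Suc k. n j)))"
    using \<open>x \<ge> 0\<close>
    by (simp only: floor_divide_of_nat_eq_div N_def[symmetric] of_int_eq_id id_apply sum_distrib_right)
  also have "\<dots> = (\<Sum>i<Suc k. \<Sum>n \<in> ?P. moebius_mu (n i) * int (N div (\<Prod>j<Suc k. n j)))"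
    by (rule sum.swap)
  also have "\<dots> = (\<Sum>i<Suc k. int (card {g \<in> {0..<k} \<rightarrow>\<^sub>E {1..N}. (\<Prod>j<k. g j) \<le> N}))"
    by (intro sum.cong refl) (simp only: lessThan_iff sum_moebius_mu_coordinate)
  also have "\<dots> = of_nat (Suc k) * (\<Sum>m = 1..N. of_nat (divisor_tau k m))"
    by (simp only: sum_constant card_PiE_prod_le of_nat_sum) simp
  finally show ?thesis by (simp add: r N_def)
qed

end
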